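(* For every integer $d\ge1$ there exists a $(d+1)$-colored tiling of $\mathbb{R}^d$ all of whose tiles have volume at most $1$ and whose minimal distance is at least $\dfrac{1}{1+2(d-1)\sqrt2}$. In particular, $d+1$ colors suffice for a colored tiling of $\mathbb{R}^d$ by bounded tiles with positive minimal distance.
   Context: A $k$-colored tiling of $\mathbb{R}^d$ is a locally finite collection of closed bounded connected tiles covering $\mathbb{R}^d$, distinct tiles intersecting only in their boundaries, each tile assigned one of $k$ colors. The minimal distance is the infimum of the Euclidean distances $|x-y|$ over $x\in T_i$, $y\in T_j$ with $i\neq j$ and $T_i,T_j$ of the same color. *)

theory Defs
  imports "HOL-Analysis.Analysis"
begin

definition colored_tiling ::
  "nat \<Rightarrow> ('a::euclidean_space) set set \<Rightarrow> ('a set \<Rightarrow> nat) \<Rightarrow> bool" where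
  "colored_tiling k \<T> col \<longleftrightarrow>
     (\<forall>T\<in>\<T>. closed T \<and> bounded T \<and> connected T) \<and>
     \<Union>\<T> = UNIV \<and>
     (\<forall>x. \<exists>e>0. finite {T\<in>\<T>. T \<inter> ball x e \<noteq> {}}) \<and>
     (\<forall>T\<in>\<T>. \<forall>T'\<in>\<T>. T \<noteq> T' \<longrightarrow> T \<inter> T' \<subseteq> frontier T \<inter> frontier T') \<and>
     (\<forall>T\<in>\<T>. col T < k)"

definition min_distance ::
  "('a::metric_space) set set \<Rightarrow> ('a set \<Rightarrow> nat) \<Rightarrow> ereal" where
  "min_distance \<T> col =
     (INF p \<in> {(x, y). \<exists>T\<in>\<T>. \<exists>T'\<in>\<T>. T \<noteq> T' \<and> col T = col T' \<and> x \<in> T \<and> y \<in> T'}.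
        ereal (dist (fst p) (snd p)))"

end

theory Submission
  imports Defs
begin

text \<open>Order the coordinates by a bijection \<open>\<iota>\<close> onto \<open>{0..<d}\<close> and tile the space by unit
cubes indexed by \<open>m \<in> \<int>^d\<close>: the cube \<open>m\<close> has corner \<open>m i - S (\<iota> i + 1) / (d + 1)\<close> in
coordinate \<open>i\<close>, where \<open>S k\<close> is the sum of the \<open>m j\<close> with \<open>k \<le> \<iota> j\<close>; so each layer of cubes is
shifted against the layer below by a multiple of \<open>1 / (d + 1)\<close>. The cube \<open>m\<close> gets the colour
\<open>(\<Sum>i. m i) mod (d + 1)\<close>. If the corners of two cubes of the same colour differed by at most 1
in every coordinate, the tail sums \<open>S k\<close> of the difference of their indices would satisfy
\<open>\<bar>S k - (1 + 1 / (d + 1)) S (k + 1)\<bar> \<le> 1\<close> and \<open>S d = 0\<close>, forcing \<open>\<bar>S 0\<bar> \<le> d\<close>. As \<open>d + 1\<close>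
divides \<open>S 0\<close>, this gives \<open>S 0 = 0\<close>, then all \<open>S k = 0\<close>, and the cubes coincide. Hence some
corners differ by more than 1, and since they lie on the lattice \<open>\<int> / (d + 1)\<close>, by at least
\<open>1 + 1 / (d + 1)\<close>: same-coloured cubes are at distance at least \<open>1 / (d + 1)\<close>.\<close>

lemma int_seq_backward_bound:
  fixes S :: "nat \<Rightarrow> int" and a :: real
  assumes "S d = 0"
    and rec: "\<And>k. k < d \<Longrightarrow> \<bar>of_int (S k) - a * of_int (S (Suc k))\<bar> \<le> 1"
    and "1 \<le> a" and "(a - 1) * real d < 1"
    and "k \<le> d"
  shows "\<bar>S k\<bar> \<le> int (d - k)"
  using \<open>k \<le> d\<close>
proof (induction k rule: inc_induct)
  case base
  then show ?case using \<open>S d = 0\<close> by simp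
next
  case (step n)
  have IH: "\<bar>of_int (S (Suc n))\<bar> \<le> real (d - Suc n)"
    using step.IH by (metis of_int_abs of_int_le_iff of_int_of_nat_eq)
  have "(a - 1) * real (d - Suc n) \<le> (a - 1) * real d"
    using \<open>1 \<le> a\<close> by (intro mult_left_mono) auto
  have "\<bar>a * of_int (S (Suc n))\<bar> = a * \<bar>of_int (S (Suc n))\<bar>"
    using \<open>1 \<le> a\<close> by (simp add: abs_mult)
  then have "\<bar>of_int (S n)\<bar> \<le> 1 + a * \<bar>of_int (S (Suc n))\<bar>"
    using rec[OF \<open>n < d\<close>] by linarith
  also have "\<dots> \<le> 1 + a * real (d - Suc n)"
    using IH \<open>1 \<le> a\<close> by (simp add: mult_left_mono)
  also have "\<dots> < real (d - n) + 1"
    using \<open>(a - 1) * real (d - Suc n) \<le> (a - 1) * real d\<close> \<open>(a - 1) * real d < 1\<close> \<open>n < d\<close>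
    by (simp add: of_nat_diff algebra_simps)
  finally show ?case by linarith
qed

lemma int_seq_forward_zero:
  fixes S :: "nat \<Rightarrow> int" and a :: real
  assumes "S 0 = 0"
    and rec: "\<And>k. k < d \<Longrightarrow> \<bar>of_int (S k) - a * of_int (S (Suc k))\<bar> \<le> 1"
    and "1 < a" and "k \<le> d"
  shows "S k = 0"
  using \<open>k \<le> d\<close>
proof (induction k)
  case 0
  show ?case by fact
next
  case (Suc n)
  then have "a * \<bar>of_int (S (Suc n))\<bar> \<le> 1"
    using rec[of n] \<open>1 < a\<close> by (simp add: abs_mult)
  moreover have "a * 1 \<le> a * \<bar>of_int (S (Suc n))\<bar>" if "S (Suc n) \<noteq> 0"
    using that \<open>1 < a\<close> by (intro mult_left_mono) auto
  ultimately show ?case using \<open>1 < a\<close> by fastforce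
qed

lemma min_distance_geI:
  assumes "\<And>T T' x y. T \<in> \<T> \<Longrightarrow> T' \<in> \<T> \<Longrightarrow> T \<noteq> T' \<Longrightarrow> col T = col T' \<Longrightarrow>
      x \<in> T \<Longrightarrow> y \<in> T' \<Longrightarrow> c \<le> dist x y"
  shows "ereal c \<le> min_distance \<T> col"
  unfolding min_distance_def
proof (rule INF_greatest, clarify)
  fix x y T T'
  assume "T \<in> \<T>" "T' \<in> \<T>" "T \<noteq> T'" "col T = col T'" "x \<in> T" "y \<in> T'"
  then show "ereal c \<le> ereal (dist (fst (x, y)) (snd (x, y)))" using assms by simp
qed

text \<open>For \<open>d = 1\<close> there is no shift, the tiles are the intervals \<open>[m, m + 1]\<close>, and those of the
same parity are at distance 1, which is exactly the claimed bound.\<close>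

definition colour_gap :: "nat \<Rightarrow> real" where
  "colour_gap d = (if d = 1 then 1 else 1 / (real d + 1))"

lemma bound_le_colour_gap:
  assumes "1 \<le> d"
  shows "1 / (1 + 2 * (real d - 1) * sqrt 2) \<le> colour_gap d"
proof (cases "d = 1")
  case False
  with assms have "2 \<le> real d" by simp
  moreover have "1 \<le> sqrt 2" by simp
  ultimately have "2 * (real d - 1) \<le> 2 * (real d - 1) * sqrt 2"
    using mult_left_mono[of 1 "sqrt 2" "2 * (real d - 1)"] by simp
  moreover have "real d + 1 \<le> 1 + 2 * (real d - 1)" using \<open>2 \<le> real d\<close> by simp
  ultimately have "real d + 1 \<le> 1 + 2 * (real d - 1) * sqrt 2" by linarith
  with False show ?thesis by (simp add: colour_gap_def frac_le)
qed (simp add: colour_gap_def)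

context
  fixes d :: nat and \<iota> :: "'n::finite \<Rightarrow> nat"
begin

definition tail_sum :: "('n \<Rightarrow> int) \<Rightarrow> nat \<Rightarrow> int" where
  "tail_sum m k = (\<Sum>j | k \<le> \<iota> j. m j)"

definition corner :: "('n \<Rightarrow> int) \<Rightarrow> 'n \<Rightarrow> real" where
  "corner m i = of_int (m i) - of_int (tail_sum m (Suc (\<iota> i))) / (real d + 1)"

definition tile :: "('n \<Rightarrow> int) \<Rightarrow> (real ^ 'n) set" where
  "tile m = cbox (\<chi> i. corner m i) ((\<chi> i. corner m i) + vec 1)"

definition colour :: "(real ^ 'n) set \<Rightarrow> nat" where
  "colour T = nat (sum (inv tile T) UNIV mod (int d + 1))"

lemma tail_sum_diff: "tail_sum (\<lambda>j. m j - m' j) k = tail_sum m k - tail_sum m' k"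
  unfolding tail_sum_def by (simp add: sum_subtractf)

lemma corner_diff: "corner (\<lambda>j. m j - m' j) i = corner m i - corner m' i"
  unfolding corner_def tail_sum_diff by (simp add: diff_divide_distrib)

lemma tail_sum_fun_upd: "\<iota> i < k \<Longrightarrow> tail_sum (m(i := v)) k = tail_sum m k"
  unfolding tail_sum_def by (intro sum.cong) auto

lemma corner_fun_upd_same:
  "corner (m(j := v)) j = of_int v - of_int (tail_sum m (Suc (\<iota> j))) / (real d + 1)"
  unfolding corner_def by (simp add: tail_sum_fun_upd)

lemma corner_fun_upd_other:
  "\<iota> j \<le> \<iota> i \<Longrightarrow> i \<noteq> j \<Longrightarrow> corner (m(j := v)) i = corner m i"
  unfolding corner_def by (simp add: tail_sum_fun_upd)

lemma corner_scaled:
  "(real d + 1) * corner m i = of_int ((int d + 1) * m i - tail_sum m (Suc (\<iota> i)))"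
  unfolding corner_def by (simp add: field_simps)

lemma exists_corner_abs_ge_1:
  assumes "\<delta> \<noteq> (\<lambda>_. 0)"
  shows "\<exists>i. 1 \<le> \<bar>corner \<delta> i\<bar>"
proof -
  define A where "A = \<iota> ` {i. \<delta> i \<noteq> 0}"
  have "A \<noteq> {}" "finite A" using assms unfolding A_def by auto
  then have "Max A \<in> A" by simp
  then obtain i where i: "\<iota> i = Max A" "\<delta> i \<noteq> 0" unfolding A_def by auto
  have "\<delta> j = 0" if "Suc (\<iota> i) \<le> \<iota> j" for j
  proof (rule ccontr)
    assume "\<delta> j \<noteq> 0"
    then have "\<iota> j \<le> Max A" using \<open>finite A\<close> unfolding A_def by simp
    with i that show False by simp
  qed
  then have "tail_sum \<delta> (Suc (\<iota> i)) = 0" unfolding tail_sum_def by simp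
  then have "corner \<delta> i = of_int (\<delta> i)" unfolding corner_def by simp
  moreover have "1 \<le> \<bar>\<delta> i\<bar>" using i(2) by linarith
  ultimately show ?thesis by (intro exI[of _ i]) simp
qed

lemma distinct_corner_gap_ge_1:
  assumes "m \<noteq> m'"
  shows "\<exists>i. 1 \<le> \<bar>corner m i - corner m' i\<bar>"
  using exists_corner_abs_ge_1[of "\<lambda>j. m j - m' j"] assms by (auto simp: fun_eq_iff corner_diff)

lemma mem_tile: "x \<in> tile m \<longleftrightarrow> (\<forall>i. corner m i \<le> x $ i \<and> x $ i \<le> corner m i + 1)"
  by (simp add: tile_def mem_box_cart)

lemma emeasure_tile: "emeasure lebesgue (tile m) = 1"
proof -
  have "emeasure lebesgue (tile m) = emeasure lborel (tile m)"
    unfolding tile_def by simp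
  also have "\<dots> = 1"
    unfolding tile_def
    by (simp add: emeasure_lborel_cbox_eq Basis_vec_def) (auto simp: inner_axis intro!: prod.neutral)
  finally show ?thesis .
qed

lemma inj_tile: "inj tile"
proof
  fix m m' assume eq: "tile m = tile m'"
  show "m = m'"
  proof (rule ccontr)
    assume "m \<noteq> m'"
    then obtain i where i: "1 \<le> \<bar>corner m i - corner m' i\<bar>"
      using distinct_corner_gap_ge_1 by blast
    have "(\<chi> i. corner m i) \<in> tile m'" "(\<chi> i. corner m i) + vec 1 \<in> tile m'"
      unfolding eq[symmetric] by (auto simp: mem_tile)
    then have "corner m' i \<le> corner m i" "corner m i \<le> corner m' i"
      unfolding mem_tile by auto
    with i show False by simp
  qed
qed

lemma colour_tile: "int (colour (tile m)) = sum m UNIV mod (int d + 1)"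
  unfolding colour_def inv_f_f[OF inj_tile] by simp

lemma colour_less: "colour T < d + 1"
proof -
  let ?r = "sum (inv tile T) UNIV mod (int d + 1)"
  have "0 \<le> ?r" "?r < int d + 1" by (rule pos_mod_sign, simp) (rule pos_mod_bound, simp)
  then show ?thesis unfolding colour_def by (simp add: nat_less_iff)
qed

lemma tile_inter_subset_frontier:
  assumes "m \<noteq> m'"
  shows "tile m \<inter> tile m' \<subseteq> frontier (tile m) \<inter> frontier (tile m')"
proof
  fix x assume x: "x \<in> tile m \<inter> tile m'"
  obtain i where i: "1 \<le> \<bar>corner m i - corner m' i\<bar>"
    using distinct_corner_gap_ge_1[OF assms] by blast
  from x have "corner m i \<le> x $ i" "x $ i \<le> corner m i + 1"
    "corner m' i \<le> x $ i" "x $ i \<le> corner m' i + 1"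
    by (simp_all add: mem_tile)
  with i have "x \<notin> box (\<chi> i. corner m i) ((\<chi> i. corner m i) + vec 1)"
    "x \<notin> box (\<chi> i. corner m' i) ((\<chi> i. corner m' i) + vec 1)"
    unfolding mem_box_cart by (auto intro!: exI[of _ i])
  with x show "x \<in> frontier (tile m) \<inter> frontier (tile m')"
    unfolding tile_def frontier_cbox by auto
qed

lemma tiles_locally_finite: "finite {T \<in> range tile. T \<inter> ball x 1 \<noteq> {}}"
proof -
  define B where "B = \<lceil>(real d + 1) * (norm x + 2)\<rceil>"
  define scaled where "scaled m = (\<lambda>i. (int d + 1) * m i - tail_sum m (Suc (\<iota> i)))" for m
  have corner_scaled_eq: "corner m i = of_int (scaled m i) / (real d + 1)" for m i
    using corner_scaled[of m i] unfolding scaled_def by (simp add: field_simps)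
  define M where "M = {m. tile m \<inter> ball x 1 \<noteq> {}}"
  have "inj_on scaled M"
  proof (rule inj_onI)
    fix m m' assume "scaled m = scaled m'"
    then have "corner m = corner m'" by (simp add: corner_scaled_eq fun_eq_iff)
    then have "tile m = tile m'" unfolding tile_def by simp
    then show "m = m'" by (rule injD[OF inj_tile])
  qed
  moreover have "scaled m i \<in> {-B..B}" if "m \<in> M" for m i
  proof -
    from \<open>m \<in> M\<close>
    obtain y where y: "y \<in> tile m" "dist x y < 1" unfolding M_def by auto
    have "\<bar>x $ i - y $ i\<bar> \<le> dist x y" "\<bar>x $ i\<bar> \<le> norm x"
      using component_le_norm_cart[of "x - y" i] component_le_norm_cart[of x i]
      by (simp_all add: dist_norm)
    moreover have "corner m i \<le> y $ i" "y $ i \<le> corner m i + 1"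
      using y(1) by (simp_all add: mem_tile)
    ultimately have "\<bar>corner m i\<bar> \<le> norm x + 2" using y(2) by linarith
    then have "\<bar>(real d + 1) * corner m i\<bar> \<le> (real d + 1) * (norm x + 2)"
      by (simp add: abs_mult)
    also have "\<dots> \<le> of_int B" unfolding B_def by (rule le_of_int_ceiling)
    finally have "\<bar>scaled m i\<bar> \<le> B"
      unfolding scaled_def corner_scaled by linarith
    then show "scaled m i \<in> {-B..B}" by auto
  qed
  then have "scaled ` M \<subseteq> PiE UNIV (\<lambda>_. {-B..B})" by (auto simp: PiE_UNIV_domain)
  ultimately have "finite M" by (rule inj_on_finite) (simp add: finite_PiE)
  moreover have "{T \<in> range tile. T \<inter> ball x 1 \<noteq> {}} = tile ` M"
    unfolding M_def by auto
  ultimately show ?thesis by simp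
qed

context
  assumes \<iota>_bij: "bij_betw \<iota> UNIV {0..<d}"
begin

lemma index_less: "\<iota> i < d"
  using bij_betw_apply[OF \<iota>_bij] by simp

lemma index_eq_iff: "\<iota> i = \<iota> j \<longleftrightarrow> i = j"
  using bij_betw_imp_inj_on[OF \<iota>_bij] by (auto dest: injD)

lemma index_surj: "k < d \<Longrightarrow> \<exists>i. \<iota> i = k"
  using bij_betw_imp_surj_on[OF \<iota>_bij] by (metis atLeastLessThan_iff imageE zero_le)

lemma tail_sum_eq_0:
  assumes "d \<le> k"
  shows "tail_sum m k = 0"
proof -
  have "\<not> k \<le> \<iota> j" for j using index_less[of j] assms by linarith
  then show ?thesis unfolding tail_sum_def by simp
qed

lemma tail_sum_at_index: "tail_sum m (\<iota> i) = m i + tail_sum m (Suc (\<iota> i))"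
proof -
  have "{j. \<iota> i \<le> \<iota> j} = insert i {j. Suc (\<iota> i) \<le> \<iota> j}"
    by (auto simp: index_eq_iff Suc_le_eq order.order_iff_strict)
  then show ?thesis unfolding tail_sum_def by simp
qed

lemma corner_eq_tail_sums:
  "corner m i = of_int (tail_sum m (\<iota> i)) - (1 + 1 / (real d + 1)) * of_int (tail_sum m (Suc (\<iota> i)))"
  unfolding corner_def tail_sum_at_index by (simp add: algebra_simps)

lemma exists_corner_abs_gt_1:
  assumes "\<delta> \<noteq> (\<lambda>_. 0)" and "(int d + 1) dvd sum \<delta> UNIV"
  shows "\<exists>i. 1 < \<bar>corner \<delta> i\<bar>"
proof (rule ccontr)
  assume "\<nexists>i. 1 < \<bar>corner \<delta> i\<bar>"
  define S where "S = tail_sum \<delta>"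
  have rec: "\<bar>of_int (S k) - (1 + 1 / (real d + 1)) * of_int (S (Suc k))\<bar> \<le> 1" if "k < d" for k
  proof -
    obtain i where "\<iota> i = k" using index_surj[OF \<open>k < d\<close>] by blast
    with \<open>\<nexists>i. 1 < \<bar>corner \<delta> i\<bar>\<close> show ?thesis
      unfolding S_def using corner_eq_tail_sums[of \<delta> i] by (metis not_le)
  qed
  have "S 0 = sum \<delta> UNIV" unfolding S_def tail_sum_def by simp
  moreover have "\<bar>S 0\<bar> \<le> int d"
    using int_seq_backward_bound[of S d, OF _ rec, of 0] tail_sum_eq_0 unfolding S_def
    by (simp add: field_simps)
  ultimately have "S 0 = 0"
    using assms(2) dvd_imp_le_int[of "S 0" "int d + 1"] by fastforce
  then have "S k = 0" if "k \<le> d" for k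
    using int_seq_forward_zero[of S d, OF _ rec] that by simp
  then have "\<delta> i = 0" for i
    using tail_sum_at_index[of \<delta> i] index_less[of i] unfolding S_def by simp
  with assms(1) show False by auto
qed

lemma same_colour_corner_gap:
  assumes "m \<noteq> m'" and "(int d + 1) dvd (sum m UNIV - sum m' UNIV)"
  shows "\<exists>i. 1 + colour_gap d \<le> \<bar>corner m i - corner m' i\<bar>"
proof -
  define \<delta> where "\<delta> = (\<lambda>j. m j - m' j)"
  have "\<delta> \<noteq> (\<lambda>_. 0)" using assms(1) unfolding \<delta>_def by (auto simp: fun_eq_iff)
  moreover have "sum \<delta> UNIV = sum m UNIV - sum m' UNIV" unfolding \<delta>_def by (simp add: sum_subtractf)
  ultimately obtain i where big: "1 < \<bar>corner \<delta> i\<bar>"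
    using exists_corner_abs_gt_1[of \<delta>] assms(2) by auto
  moreover have "corner \<delta> i = corner m i - corner m' i" unfolding \<delta>_def by (rule corner_diff)
  moreover have "1 + colour_gap d \<le> \<bar>corner \<delta> i\<bar>"
  proof -
    define z where "z = (int d + 1) * \<delta> i - tail_sum \<delta> (Suc (\<iota> i))"
    have z: "(real d + 1) * corner \<delta> i = of_int z" unfolding z_def by (rule corner_scaled)
    show ?thesis
    proof (cases "d = 1")
      case True
      then have "tail_sum \<delta> (Suc (\<iota> i)) = 0" by (simp add: tail_sum_eq_0)
      then have "corner \<delta> i = of_int (\<delta> i)" unfolding corner_def by simp
      with big have "1 < \<bar>\<delta> i\<bar>" by linarith
      then have "2 \<le> \<bar>of_int (\<delta> i) :: real\<bar>" by linarith
      with True \<open>corner \<delta> i = of_int (\<delta> i)\<close> show ?thesis by (simp add: colour_gap_def)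
    next
      case False
      have "real d + 1 < \<bar>of_int z\<bar>"
        using big z[symmetric] by (simp add: abs_mult)
      then have "of_int (int d + 1) < (of_int \<bar>z\<bar> :: real)" by simp
      then have "int d + 2 \<le> \<bar>z\<bar>" by (simp only: of_int_less_iff)
      then have "real d + 2 \<le> \<bar>of_int z\<bar>" by linarith
      then have "real d + 2 \<le> (real d + 1) * \<bar>corner \<delta> i\<bar>"
        using z[symmetric] by (simp add: abs_mult)
      with False show ?thesis by (simp add: colour_gap_def field_simps)
    qed
  qed
  ultimately show ?thesis by auto
qed

text \<open>The shift of coordinate \<open>i\<close> only depends on the \<open>m j\<close> with \<open>\<iota> i < \<iota> j\<close>, so the indices can be
chosen from the top layer down, each one by rounding.\<close>

lemma tiles_cover_upper_coordinates:
  "k \<le> d \<Longrightarrow> \<exists>m. \<forall>i. k \<le> \<iota> i \<longrightarrow> corner m i \<le> x $ i \<and> x $ i \<le> corner m i + 1"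
proof (induction k rule: inc_induct)
  case base
  show ?case using index_less by (auto simp: not_le[symmetric])
next
  case (step n)
  then obtain m where m: "\<And>i. Suc n \<le> \<iota> i \<Longrightarrow> corner m i \<le> x $ i \<and> x $ i \<le> corner m i + 1"
    by blast
  obtain j where j: "\<iota> j = n" using index_surj[OF \<open>n < d\<close>] by blast
  define s where "s = of_int (tail_sum m (Suc n)) / (real d + 1)"
  define m' where "m' = m(j := \<lfloor>x $ j + s\<rfloor>)"
  have "corner m' i \<le> x $ i \<and> x $ i \<le> corner m' i + 1" if "n \<le> \<iota> i" for i
  proof (cases "i = j")
    case True
    have "corner m' j = of_int \<lfloor>x $ j + s\<rfloor> - s"
      unfolding m'_def s_def corner_fun_upd_same j ..
    then show ?thesis unfolding True
      using of_int_floor_le[of "x $ j + s"] real_of_int_floor_add_one_gt[of "x $ j + s"] by linarith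
  next
    case False
    then have "\<iota> i \<noteq> \<iota> j" by (simp add: index_eq_iff)
    with that j have "Suc n \<le> \<iota> i" by simp
    moreover have "corner m' i = corner m i"
      unfolding m'_def using False j that by (simp add: corner_fun_upd_other)
    ultimately show ?thesis using m by simp
  qed
  then show ?case by blast
qed

lemma tiles_cover: "\<exists>m. x \<in> tile m"
  using tiles_cover_upper_coordinates[of 0 x] by (auto simp: mem_tile)

lemma colored_tiling_tiles: "colored_tiling (d + 1) (range tile) colour"
proof -
  have "\<forall>T\<in>range tile. closed T \<and> bounded T \<and> connected T"
    unfolding tile_def by (auto intro: convex_connected)
  moreover have "\<Union> (range tile) = UNIV" using tiles_cover by blast
  moreover have "\<forall>x. \<exists>e>0. finite {T \<in> range tile. T \<inter> ball x e \<noteq> {}}"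
    by (intro allI exI[of _ 1]) (simp add: tiles_locally_finite)
  moreover have "\<forall>T\<in>range tile. \<forall>T'\<in>range tile. T \<noteq> T' \<longrightarrow> T \<inter> T' \<subseteq> frontier T \<inter> frontier T'"
  proof (intro ballI impI)
    fix T T' assume "T \<in> range tile" "T' \<in> range tile" "T \<noteq> T'"
    then obtain m m' where "T = tile m" "T' = tile m'" "m \<noteq> m'" by blast
    then show "T \<inter> T' \<subseteq> frontier T \<inter> frontier T'"
      using tile_inter_subset_frontier[of m m'] by simp
  qed
  ultimately show ?thesis unfolding colored_tiling_def using colour_less by simp
qed

lemma min_distance_tiles:
  "ereal (colour_gap d) \<le> min_distance (range tile) colour"
proof (rule min_distance_geI)
  fix T T' x y
  assume "T \<in> range tile" "T' \<in> range tile" "T \<noteq> T'" "colour T = colour T'" "x \<in> T" "y \<in> T'"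
  then obtain m m' where "T = tile m" "T' = tile m'" "m \<noteq> m'" and xy: "x \<in> tile m" "y \<in> tile m'"
    by blast
  with \<open>colour T = colour T'\<close> have "sum m UNIV mod (int d + 1) = sum m' UNIV mod (int d + 1)"
    by (metis colour_tile)
  then have "(int d + 1) dvd (sum m UNIV - sum m' UNIV)" by (simp add: mod_eq_dvd_iff)
  with \<open>m \<noteq> m'\<close> obtain i
    where i: "1 + colour_gap d \<le> \<bar>corner m i - corner m' i\<bar>"
    using same_colour_corner_gap by blast
  from xy have "corner m i \<le> x $ i" "x $ i \<le> corner m i + 1" "corner m' i \<le> y $ i" "y $ i \<le> corner m' i + 1"
    by (simp_all add: mem_tile)
  moreover have "\<bar>x $ i - y $ i\<bar> \<le> dist x y"
    using component_le_norm_cart[of "x - y" i] by (simp add: dist_norm)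
  ultimately show "colour_gap d \<le> dist x y" using i by linarith
qed

end

end

theorem mainTheorem12:
  fixes d :: nat
  assumes "d = CARD('n::finite)"
  shows "\<exists>(\<T> :: (real ^ 'n) set set) col.
           colored_tiling (d + 1) \<T> col \<and>
           (\<forall>T\<in>\<T>. emeasure lebesgue T \<le> 1) \<and>
           min_distance \<T> col \<ge> ereal (1 / (1 + 2 * (real d - 1) * sqrt 2))"
proof -
  obtain \<iota> :: "'n \<Rightarrow> nat" where \<iota>: "bij_betw \<iota> UNIV {0..<d}"
    using ex_bij_betw_finite_nat[of "UNIV :: 'n set"] assms by auto
  have "1 \<le> d" using assms by simp
  then have "ereal (1 / (1 + 2 * (real d - 1) * sqrt 2)) \<le> ereal (colour_gap d)"
    by (simp only: ereal_less_eq(3) bound_le_colour_gap)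
  also have "\<dots> \<le> min_distance (range (tile d \<iota>)) (colour d \<iota>)"
    by (rule min_distance_tiles[OF \<iota>])
  finally have "ereal (1 / (1 + 2 * (real d - 1) * sqrt 2)) \<le> min_distance (range (tile d \<iota>)) (colour d \<iota>)" .
  with colored_tiling_tiles[OF \<iota>] show ?thesis
    by (intro exI[of _ "range (tile d \<iota>)"] exI[of _ "colour d \<iota>"]) (simp add: emeasure_tile)
qed

end
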